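(* Let $I$ be a resident-minimal instance, $I'$ a resident-changeless and hospital-complete extension of $I$, and $(P,Y)$ a prescription for $I'$. Then $(P,X)$, where $X=Y\cup(\mathrm{rej}(I')\setminus\mathrm{rej}(I))$, is a (general) prescription for $I$.
   Context: An instance $I$ consists of finite disjoint sets $R$ (residents) and $H$ (hospitals), a positive integer quota $q_h$ for each $h\in H$, for each $r\in R$ a preference list of $r$ (a sequence of distinct members of $H$, not necessarily all), and for each $h\in H$ a preference list of $h$ (a sequence of distinct members of $R$). A list is complete if it contains every member of the opposite side; an instance is hospital-complete if every hospital's list is complete. A match is a pair $(r,h)\in R\times H$. For a set $M$ of matches, $\mathrm{res}_h M=\{r:(r,h)\in M\}$, $\mathrm{res}\,M=\{r:(r,h)\in M\text{ for some }h\}$. $J$ is an extension of $I$ (same $R,H$, quotas) if every list of $J$ has the corresponding list of $I$ as a prefix; it is resident-changeless if every resident's list is the same in $I$ and $J$. An event is $(r,h)^+$ (proposal) or $(r,h)^-$ (rejection). For an event sequence $\sigma$, $\mathrm{prop}(\sigma)$, $\mathrm{rej}(\sigma)$ are the sets of matches proposed/rejected in $\sigma$, $\mathrm{tent}(\sigma)=\mathrm{prop}(\sigma)\setminus\mathrm{rej}(\sigma)$, and $\mathrm{pend}_I(\sigma)$ is the set of $(r,h)\in\mathrm{tent}(\sigma)$ with $r$ not on the list of $h$ in $I$. A match $(r,h)\in M$ is ousted from $M$ in $I$ if the list of $h$ in $I$ contains at least $q_h$ residents of $\mathrm{res}_h M$ and either $r$ is not on it or $r$ is preceded on it by at least $q_h$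 residents of $\mathrm{res}_h M$. $I$-feasible sequences: the empty sequence is $I$-feasible; if $\sigma$ is $I$-feasible then $\sigma+(r,h)^+$ is $I$-feasible if $r\notin\mathrm{res}\,\mathrm{tent}(\sigma)$, $(r,h)\notin\mathrm{prop}(\sigma)$, $h$ is on the list of $r$ in $I$ and $(r,h')\in\mathrm{rej}(\sigma)$ for every $h'$ preceding $h$ on it; and $\sigma+(r,h)^-$ is $I$-feasible if $(r,h)$ is ousted from $\mathrm{prop}(\sigma)$ in $I$ and $(r,h)\notin\mathrm{rej}(\sigma)$. All maximal $I$-feasible sequences contain the same events; $\mathrm{prop}(I),\mathrm{rej}(I),\mathrm{tent}(I),\mathrm{pend}(I)$ denote $\mathrm{prop}(\sigma),\mathrm{rej}(\sigma),\mathrm{tent}(\sigma),\mathrm{pend}_I(\sigma)$ for any maximal $I$-feasible $\sigma$. $I$ is resident-minimal if $\mathrm{prop}(I)$ equals the set of matches $(r,h)$ with $h$ on the list of $r$ in $I$. For a resident-minimal instance $I$, a (general) prescription for $I$ is a pair $(P,X)$ of sets of matches such that: (P1) $P\cap\mathrm{prop}(I)=\emptyset$; (P2) for each $r\in R$ there is at most one $h$ with $(r,h)\in P$; (P3) $X\subseteq\mathrm{tent}(I)$; (P4) $\mathrm{res}\,P\cap\mathrm{res}\,\mathrm{tent}(I)\subseteq\mathrm{res}\,X$; (P5) for each $h$, $|\mathrm{res}_h(P\cup(\mathrm{tent}(I)\setminus X))|\le q_h$, with equality if $\mathrm{res}_h X\ne\emptyset$; (P6') for each $h$, every member of $\mathrm{res}_h(P\cup((\mathrm{tent}(I)\setminus\mathrm{pend}(I))\setminus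 X))$ precedes all members of $\mathrm{res}_h(X\setminus\mathrm{pend}(I))$ in the list of $h$ in $I$, and if $\mathrm{res}_h(X\setminus\mathrm{pend}(I))\ne\emptyset$ then $\mathrm{res}_h\,\mathrm{pend}(I)\subseteq\mathrm{res}_h X$. When $I$ is hospital-complete (so $\mathrm{pend}(I)=\emptyset$), a prescription for $I$ is such a pair with (P6') read as (P6): every member of $\mathrm{res}_h(P\cup(\mathrm{tent}(I)\setminus X))$ precedes all members of $\mathrm{res}_h X$ in the list of $h$ in $I$. *)

theory Defs
  imports Main
begin

text \<open>Residents have type 'r, hospitals type 'h (so R and H are automatically disjoint).
  Lists are total functions; by convention the list of an object outside R (resp. H) is empty.\<close>

record ('r, 'h) inst =
  Res   :: "'r set"
  Hos   :: "'h set"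
  quota :: "'h \<Rightarrow> nat"
  rlist :: "'r \<Rightarrow> 'h list"
  hlist :: "'h \<Rightarrow> 'r list"

definition valid_inst :: "('r, 'h) inst \<Rightarrow> bool" where
  "valid_inst I \<longleftrightarrow> finite (Res I) \<and> finite (Hos I)
     \<and> (\<forall>h\<in>Hos I. quota I h > 0)
     \<and> (\<forall>r\<in>Res I. distinct (rlist I r) \<and> set (rlist I r) \<subseteq> Hos I)
     \<and> (\<forall>h\<in>Hos I. distinct (hlist I h) \<and> set (hlist I h) \<subseteq> Res I)
     \<and> (\<forall>r. r \<notin> Res I \<longrightarrow> rlist I r = [])
     \<and> (\<forall>h. h \<notin> Hos I \<longrightarrow> hlist I h = [])"

definition precedes :: "'a list \<Rightarrow> 'a \<Rightarrow> 'a \<Rightarrow> bool" where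
  "precedes L x y \<longleftrightarrow> (\<exists>i j. i < j \<and> j < length L \<and> L ! i = x \<and> L ! j = y)"

definition complete_list_of :: "('r, 'h) inst \<Rightarrow> bool" where
  "complete_list_of I \<longleftrightarrow> (\<forall>h\<in>Hos I. set (hlist I h) = Res I)"

abbreviation hospital_complete :: "('r, 'h) inst \<Rightarrow> bool" where
  "hospital_complete I \<equiv> complete_list_of I"

definition extension :: "('r, 'h) inst \<Rightarrow> ('r, 'h) inst \<Rightarrow> bool" where
  "extension I J \<longleftrightarrow> Res J = Res I \<and> Hos J = Hos I \<and> quota J = quota I
     \<and> (\<forall>r\<in>Res I. (\<exists>zs. rlist J r = rlist I r @ zs))
     \<and> (\<forall>h\<in>Hos I. (\<exists>zs. hlist J h = hlist I h @ zs))"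

definition resident_changeless :: "('r, 'h) inst \<Rightarrow> ('r, 'h) inst \<Rightarrow> bool" where
  "resident_changeless I J \<longleftrightarrow> (\<forall>r\<in>Res I. rlist J r = rlist I r)"

definition res_at :: "'h \<Rightarrow> ('r \<times> 'h) set \<Rightarrow> 'r set" where
  "res_at h M = {r. (r, h) \<in> M}"

definition res :: "('r \<times> 'h) set \<Rightarrow> 'r set" where
  "res M = {r. \<exists>h. (r, h) \<in> M}"

datatype ('r, 'h) event = Prop 'r 'h | Rej 'r 'h

definition props :: "('r, 'h) event list \<Rightarrow> ('r \<times> 'h) set" where
  "props \<sigma> = {(r, h). Prop r h \<in> set \<sigma>}"

definition rejs :: "('r, 'h) event list \<Rightarrow> ('r \<times> 'h) set" where
  "rejs \<sigma> = {(r, h). Rej r h \<in> set \<sigma>}"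

definition tents :: "('r, 'h) event list \<Rightarrow> ('r \<times> 'h) set" where
  "tents \<sigma> = props \<sigma> - rejs \<sigma>"

definition pends :: "('r, 'h) inst \<Rightarrow> ('r, 'h) event list \<Rightarrow> ('r \<times> 'h) set" where
  "pends I \<sigma> = {(r, h) \<in> tents \<sigma>. r \<notin> set (hlist I h)}"

definition ousted :: "('r, 'h) inst \<Rightarrow> ('r \<times> 'h) set \<Rightarrow> 'r \<Rightarrow> 'h \<Rightarrow> bool" where
  "ousted I M r h \<longleftrightarrow> (r, h) \<in> M
     \<and> card (set (hlist I h) \<inter> res_at h M) \<ge> quota I h
     \<and> (r \<notin> set (hlist I h)
        \<or> card {r' \<in> res_at h M. precedes (hlist I h) r' r} \<ge> quota I h)"

inductive feasible :: "('r, 'h) inst \<Rightarrow> ('r, 'h) event list \<Rightarrow> bool" for I where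
  feas_Nil: "feasible I []"
| feas_Prop: "\<lbrakk> feasible I \<sigma>; r \<notin> res (tents \<sigma>); (r, h) \<notin> props \<sigma>;
                h \<in> set (rlist I r);
                \<forall>h'. precedes (rlist I r) h' h \<longrightarrow> (r, h') \<in> rejs \<sigma> \<rbrakk>
              \<Longrightarrow> feasible I (\<sigma> @ [Prop r h])"
| feas_Rej: "\<lbrakk> feasible I \<sigma>; ousted I (props \<sigma>) r h; (r, h) \<notin> rejs \<sigma> \<rbrakk>
              \<Longrightarrow> feasible I (\<sigma> @ [Rej r h])"

definition maximal_feasible :: "('r, 'h) inst \<Rightarrow> ('r, 'h) event list \<Rightarrow> bool" where
  "maximal_feasible I \<sigma> \<longleftrightarrow> feasible I \<sigma> \<and> (\<forall>e. \<not> feasible I (\<sigma> @ [e]))"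

text \<open>prop(I), rej(I), tent(I), pend(I): computed from an (arbitrary) maximal I-feasible sequence\<close>

definition max_seq :: "('r, 'h) inst \<Rightarrow> ('r, 'h) event list" where
  "max_seq I = (SOME \<sigma>. maximal_feasible I \<sigma>)"

definition propI :: "('r, 'h) inst \<Rightarrow> ('r \<times> 'h) set" where
  "propI I = props (max_seq I)"

definition rejI :: "('r, 'h) inst \<Rightarrow> ('r \<times> 'h) set" where
  "rejI I = rejs (max_seq I)"

definition tentI :: "('r, 'h) inst \<Rightarrow> ('r \<times> 'h) set" where
  "tentI I = tents (max_seq I)"

definition pendI :: "('r, 'h) inst \<Rightarrow> ('r \<times> 'h) set" where
  "pendI I = pends I (max_seq I)"

definition resident_minimal :: "('r, 'h) inst \<Rightarrow> bool" where
  "resident_minimal I \<longleftrightarrow> propI I = {(r, h). h \<in> set (rlist I r)}"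

definition presc_base :: "('r, 'h) inst \<Rightarrow> ('r \<times> 'h) set \<Rightarrow> ('r \<times> 'h) set \<Rightarrow> bool" where
  "presc_base I P X \<longleftrightarrow>
     P \<subseteq> Res I \<times> Hos I \<and> X \<subseteq> Res I \<times> Hos I
     \<and> P \<inter> propI I = {}
     \<and> (\<forall>r h h'. (r, h) \<in> P \<longrightarrow> (r, h') \<in> P \<longrightarrow> h = h')
     \<and> X \<subseteq> tentI I
     \<and> res P \<inter> res (tentI I) \<subseteq> res X
     \<and> (\<forall>h\<in>Hos I. card (res_at h (P \<union> (tentI I - X))) \<le> quota I h
          \<and> (res_at h X \<noteq> {} \<longrightarrow> card (res_at h (P \<union> (tentI I - X))) = quota I h))"

definition general_prescription :: "('r, 'h) inst \<Rightarrow> ('r \<times> 'h) set \<Rightarrow> ('r \<times> 'h) set \<Rightarrow> bool" where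
  "general_prescription I P X \<longleftrightarrow> presc_base I P X
     \<and> (\<forall>h\<in>Hos I.
          (\<forall>r\<in>res_at h (P \<union> ((tentI I - pendI I) - X)).
             \<forall>r'\<in>res_at h (X - pendI I). precedes (hlist I h) r r')
          \<and> (res_at h (X - pendI I) \<noteq> {} \<longrightarrow> res_at h (pendI I) \<subseteq> res_at h X))"

text \<open>Prescription for a hospital-complete instance: (P1)--(P5) and (P6)\<close>
definition prescription :: "('r, 'h) inst \<Rightarrow> ('r \<times> 'h) set \<Rightarrow> ('r \<times> 'h) set \<Rightarrow> bool" where
  "prescription I P X \<longleftrightarrow> presc_base I P X
     \<and> (\<forall>h\<in>Hos I. \<forall>r\<in>res_at h (P \<union> (tentI I - X)).
          \<forall>r'\<in>res_at h X. precedes (hlist I h) r r')"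

end

theory Submission
  imports Defs
begin

text \<open>Since \<open>I'\<close> leaves the residents' lists unchanged and only appends to the hospitals' lists,
  a match ousted in \<open>I\<close> stays ousted in \<open>I'\<close>; hence every \<open>I\<close>-feasible sequence is absorbed by the
  run on \<open>I'\<close>. As \<open>I\<close> is resident-minimal, both runs propose the same matches, so \<open>I'\<close> only
  rejects the additional matches \<open>D = rej(I') - rej(I) \<subseteq> tent(I)\<close>, and \<open>tent(I') = tent(I) - D\<close>.
  In the hospital-complete \<open>I'\<close>, a hospital that rejects anybody holds a full quota of tentative
  residents, all of which precede every resident it rejected. Moving \<open>D\<close> into the prescribed set
  therefore keeps the quota conditions, and a prescribed resident of a hospital precedes a
  resident in \<open>D\<close> there either directly or through a member of \<open>Y\<close>, which must exist because
  otherwise the hospital would be over-full.\<close>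

section \<open>Positions in preference lists\<close>

lemma precedes_setD: "precedes L x y \<Longrightarrow> x \<in> set L \<and> y \<in> set L"
  by (auto simp: precedes_def)

lemma precedes_trans:
  assumes "distinct L" and "precedes L x y" and "precedes L y z"
  shows "precedes L x z"
proof -
  obtain i j where ij: "i < j" "j < length L" "L ! i = x" "L ! j = y"
    using assms(2) by (auto simp: precedes_def)
  obtain j' k where jk: "j' < k" "k < length L" "L ! j' = y" "L ! k = z"
    using assms(3) by (auto simp: precedes_def)
  have "j' = j" using assms(1) ij jk nth_eq_iff_index_eq by fastforce
  then show ?thesis unfolding precedes_def using ij jk by (intro exI[of _ i] exI[of _ k]) auto
qed

lemma precedes_total:
  assumes "x \<in> set L" and "y \<in> set L" and "x \<noteq> y"
  shows "precedes L x y \<or> precedes L y x"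
proof -
  obtain i j where "i < length L" "L ! i = x" "j < length L" "L ! j = y"
    using assms(1,2) by (auto simp: in_set_conv_nth)
  moreover have "i \<noteq> j" using calculation assms(3) by auto
  ultimately show ?thesis unfolding precedes_def by (cases "i < j") force+
qed

lemma precedes_append: "precedes L x y \<Longrightarrow> precedes (L @ zs) x y"
  unfolding precedes_def by (metis nth_append_left order.strict_trans length_append trans_less_add1)

lemma precedes_append_prefix:
  assumes "distinct (L @ zs)" and "precedes (L @ zs) x y" and "y \<in> set L"
  shows "precedes L x y"
proof -
  obtain i j where ij: "i < j" "j < length (L @ zs)" "(L @ zs) ! i = x" "(L @ zs) ! j = y"
    using assms(2) by (auto simp: precedes_def)
  obtain k where k: "k < length L" "L ! k = y" using assms(3) by (auto simp: in_set_conv_nth)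
  then have "(L @ zs) ! k = y" and "k < length (L @ zs)" by (simp_all add: nth_append)
  then have "j = k" using assms(1) ij nth_eq_iff_index_eq by metis
  then show ?thesis using ij k unfolding precedes_def by (auto simp: nth_append)
qed

lemma precedes_append_new:
  assumes "x \<in> set L" and "y \<in> set (L @ zs)" and "y \<notin> set L"
  shows "precedes (L @ zs) x y"
proof -
  obtain i where i: "i < length L" "L ! i = x" using assms(1) by (auto simp: in_set_conv_nth)
  obtain j where j: "j < length (L @ zs)" "(L @ zs) ! j = y"
    using assms(2) unfolding in_set_conv_nth by blast
  have "\<not> j < length L" using j assms(3) by (metis nth_append_left nth_mem)
  then show ?thesis unfolding precedes_def using i j
    by (intro exI[of _ i] exI[of _ j]) (simp add: nth_append)
qed

section \<open>Feasible sequences\<close>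

lemma props_Nil [simp]: "props [] = {}"
  by (simp add: props_def)

lemma rejs_Nil [simp]: "rejs [] = {}"
  by (simp add: rejs_def)

lemma props_append_Prop [simp]: "props (\<sigma> @ [Prop r h]) = insert (r, h) (props \<sigma>)"
  by (auto simp: props_def)

lemma props_append_Rej [simp]: "props (\<sigma> @ [Rej r h]) = props \<sigma>"
  by (auto simp: props_def)

lemma rejs_append_Prop [simp]: "rejs (\<sigma> @ [Prop r h]) = rejs \<sigma>"
  by (auto simp: rejs_def)

lemma rejs_append_Rej [simp]: "rejs (\<sigma> @ [Rej r h]) = insert (r, h) (rejs \<sigma>)"
  by (auto simp: rejs_def)

lemma feasible_rejs_subset_props: "feasible I \<sigma> \<Longrightarrow> rejs \<sigma> \<subseteq> props \<sigma>"
  by (induction rule: feasible.induct) (auto simp: ousted_def)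

lemma feasible_propsD:
  "feasible I \<sigma> \<Longrightarrow> (r, h) \<in> props \<sigma> \<Longrightarrow>
    h \<in> set (rlist I r) \<and> (\<forall>h'. precedes (rlist I r) h' h \<longrightarrow> (r, h') \<in> rejs \<sigma>)"
  by (induction rule: feasible.induct) auto

lemma feasible_rejsD:
  "feasible I \<sigma> \<Longrightarrow> (r, h) \<in> rejs \<sigma> \<Longrightarrow> \<exists>M \<subseteq> props \<sigma>. ousted I M r h"
  by (induction rule: feasible.induct) auto

lemma feasible_props_subset:
  assumes "valid_inst I" and "feasible I \<sigma>"
  shows "props \<sigma> \<subseteq> Res I \<times> Hos I"
proof
  fix x assume "x \<in> props \<sigma>"
  moreover obtain r h where "x = (r, h)" by force
  ultimately have "h \<in> set (rlist I r)" using feasible_propsD[OF assms(2)] by auto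
  then show "x \<in> Res I \<times> Hos I" using assms(1) \<open>x = (r, h)\<close> unfolding valid_inst_def by force
qed

lemma feasible_events:
  assumes "valid_inst I"
  shows "feasible I \<sigma> \<Longrightarrow>
    distinct \<sigma> \<and> set \<sigma> \<subseteq> case_prod Prop ` (Res I \<times> Hos I) \<union> case_prod Rej ` (Res I \<times> Hos I)"
proof (induction rule: feasible.induct)
  case (feas_Prop \<sigma> r h)
  then have "(r, h) \<in> Res I \<times> Hos I"
    using feasible_props_subset[OF assms feasible.feas_Prop[OF feas_Prop.hyps]] by auto
  then show ?case using feas_Prop by (auto simp: props_def)
next
  case (feas_Rej \<sigma> r h)
  then have "(r, h) \<in> Res I \<times> Hos I"
    using feasible_props_subset[OF assms feas_Rej.hyps(1)] by (auto simp: ousted_def)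
  then show ?case using feas_Rej by (auto simp: rejs_def)
qed simp

lemma maximal_feasible_max_seq:
  assumes "valid_inst I"
  shows "maximal_feasible I (max_seq I)"
proof -
  define E where "E = case_prod Prop ` (Res I \<times> Hos I) \<union> case_prod Rej ` (Res I \<times> Hos I)"
  have "finite E" using assms by (auto simp: E_def valid_inst_def)
  then have "length \<sigma> < Suc (card E)" if "feasible I \<sigma>" for \<sigma>
    using feasible_events[OF assms that] by (metis E_def card_mono distinct_card less_Suc_eq_le)
  then obtain \<sigma> where \<sigma>: "feasible I \<sigma>" "\<forall>\<tau>. feasible I \<tau> \<longrightarrow> length \<tau> \<le> length \<sigma>"
    using Lattices_Big.ex_has_greatest_nat[of "feasible I" "[]" length] feas_Nil by blast
  then have "maximal_feasible I \<sigma>" unfolding maximal_feasible_def by fastforce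
  then show ?thesis unfolding max_seq_def by (rule someI)
qed

lemma maximal_feasible_proposes:
  assumes m: "maximal_feasible I \<sigma>" and h: "h \<in> set (rlist I r)"
    and before: "\<forall>h'. precedes (rlist I r) h' h \<longrightarrow> (r, h') \<in> rejs \<sigma>"
  shows "(r, h) \<in> props \<sigma>"
proof (rule ccontr)
  assume np: "(r, h) \<notin> props \<sigma>"
  have f: "feasible I \<sigma>" using m by (simp add: maximal_feasible_def)
  have "r \<in> res (tents \<sigma>)"
    using m feasible.feas_Prop[OF f _ np h before] by (auto simp: maximal_feasible_def)
  then obtain h'' where p'': "(r, h'') \<in> props \<sigma>" and nr: "(r, h'') \<notin> rejs \<sigma>"
    by (auto simp: res_def tents_def)
  note h'' = feasible_propsD[OF f p'']
  have "h'' \<noteq> h" using np p'' by auto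
  then consider "precedes (rlist I r) h'' h" | "precedes (rlist I r) h h''"
    using precedes_total h'' h by metis
  then show False
    using before nr h'' np feasible_rejs_subset_props[OF f] by cases blast+
qed

lemma maximal_feasible_rejects:
  "maximal_feasible I \<sigma> \<Longrightarrow> ousted I (props \<sigma>) r h \<Longrightarrow> (r, h) \<in> rejs \<sigma>"
  by (metis feasible.feas_Rej maximal_feasible_def)

section \<open>Extensions\<close>

lemma ousted_extension:
  assumes v: "valid_inst I" and v': "valid_inst I'" and e: "extension I I'"
    and MM: "M \<subseteq> M'" and o: "ousted I M r h"
  shows "ousted I' M' r h"
proof (cases "h \<in> Hos I")
  case False
  then have "hlist I h = []" and "hlist I' h = []"
    using v v' e by (simp_all add: valid_inst_def extension_def)
  then show ?thesis using o MM e by (auto simp: ousted_def extension_def)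
next
  case True
  obtain zs where zs: "hlist I' h = hlist I h @ zs" using e True by (auto simp: extension_def)
  define L where "L = hlist I h"
  have fin: "finite (set (L @ zs))" by simp
  have q: "quota I' h = quota I h" using e by (simp add: extension_def)
  have c1: "quota I h \<le> card (set L \<inter> res_at h M)" using o by (simp add: ousted_def L_def)
  also have "\<dots> \<le> card (set (L @ zs) \<inter> res_at h M')"
    using MM by (intro card_mono) (auto simp: res_at_def)
  finally have c1': "quota I h \<le> card (set (L @ zs) \<inter> res_at h M')" .
  have c2: "quota I h \<le> card {r' \<in> res_at h M'. precedes (L @ zs) r' r}"
    if rin: "r \<in> set (L @ zs)"
  proof (cases "r \<in> set L")
    case True
    then have "quota I h \<le> card {r' \<in> res_at h M. precedes L r' r}"
      using o by (simp add: ousted_def L_def)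
    also have "\<dots> \<le> card {r' \<in> res_at h M'. precedes (L @ zs) r' r}"
      using MM precedes_append
      by (intro card_mono[OF finite_subset[OF _ fin]]) (auto simp: res_at_def dest: precedes_setD)
    finally show ?thesis .
  next
    case False
    have "card (set L \<inter> res_at h M) \<le> card {r' \<in> res_at h M'. precedes (L @ zs) r' r}"
      using MM precedes_append_new[OF _ rin False]
      by (intro card_mono[OF finite_subset[OF _ fin]]) (auto simp: res_at_def dest: precedes_setD)
    then show ?thesis using c1 by simp
  qed
  have "(r, h) \<in> M'" using o MM by (auto simp: ousted_def)
  then show ?thesis unfolding ousted_def zs q L_def[symmetric] using c1' c2 by blast
qed

lemma resident_changeless_rlist_eq:
  assumes "valid_inst I" and "valid_inst I'" and "extension I I'" and "resident_changeless I I'"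
  shows "rlist I' = rlist I"
proof
  fix r show "rlist I' r = rlist I r"
    using assms
    by (cases "r \<in> Res I") (auto simp: valid_inst_def extension_def resident_changeless_def)
qed

lemma feasible_subsumed_by_maximal_extension:
  assumes v: "valid_inst I" and v': "valid_inst I'" and e: "extension I I'"
    and rl: "rlist I' = rlist I" and m': "maximal_feasible I' \<sigma>'"
  shows "feasible I \<sigma> \<Longrightarrow> props \<sigma> \<subseteq> props \<sigma>' \<and> rejs \<sigma> \<subseteq> rejs \<sigma>'"
proof (induction rule: feasible.induct)
  case (feas_Prop \<tau> r h)
  then have "(r, h) \<in> props \<sigma>'"
    using maximal_feasible_proposes[OF m', of h r] rl by auto
  then show ?case using feas_Prop.IH by simp
next
  case (feas_Rej \<tau> r h)
  then have "(r, h) \<in> rejs \<sigma>'"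
    using maximal_feasible_rejects[OF m' ousted_extension[OF v v' e _ feas_Rej.hyps(2)]] by blast
  then show ?case using feas_Rej.IH by simp
qed simp

section \<open>Hospital-complete instances\<close>

text \<open>The first rejected resident in the list of \<open>h\<close> was ousted by at least \<open>q\<^sub>h\<close> residents
  ahead of it, none of which has been rejected.\<close>

lemma complete_rejection_quota_le_tents:
  assumes v: "valid_inst I" and c: "complete_list_of I" and f: "feasible I \<sigma>"
    and rj: "(r', h) \<in> rejs \<sigma>"
  shows "quota I h \<le> card (res_at h (tents \<sigma>))"
proof -
  have "(r', h) \<in> Res I \<times> Hos I"
    using rj feasible_rejs_subset_props[OF f] feasible_props_subset[OF v f] by blast
  then have sL: "set (hlist I h) = Res I" and dL: "distinct (hlist I h)" and r': "r' \<in> Res I"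
    using v c by (auto simp: complete_list_of_def valid_inst_def)
  define L where "L = hlist I h"
  define Q where "Q i \<longleftrightarrow> i < length L \<and> (L ! i, h) \<in> rejs \<sigma>" for i
  obtain k where "Q k" using r' sL rj by (metis L_def Q_def in_set_conv_nth)
  define i0 where "i0 = (LEAST i. Q i)"
  have Qi0: "Q i0" using \<open>Q k\<close> unfolding i0_def by (rule LeastI)
  define r0 where "r0 = L ! i0"
  have "(r0, h) \<in> rejs \<sigma>" using Qi0 by (simp add: Q_def r0_def)
  then obtain M where M: "M \<subseteq> props \<sigma>" "ousted I M r0 h" using feasible_rejsD[OF f] by blast
  have "quota I h \<le> card {r'' \<in> res_at h M. precedes L r'' r0}"
    using M(2) Qi0 by (auto simp: ousted_def L_def Q_def r0_def)
  also have "\<dots> \<le> card (res_at h (tents \<sigma>))"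
  proof (rule card_mono)
    have "res_at h (tents \<sigma>) \<subseteq> Res I"
      using feasible_props_subset[OF v f] by (auto simp: res_at_def tents_def)
    then show "finite (res_at h (tents \<sigma>))" using v finite_subset by (auto simp: valid_inst_def)
    show "{r'' \<in> res_at h M. precedes L r'' r0} \<subseteq> res_at h (tents \<sigma>)"
    proof
      fix x assume x: "x \<in> {r'' \<in> res_at h M. precedes L r'' r0}"
      then obtain i j where ij: "i < j" "j < length L" "L ! i = x" "L ! j = r0"
        by (auto simp: precedes_def)
      have "j = i0" using ij dL Qi0 nth_eq_iff_index_eq unfolding r0_def L_def Q_def by metis
      then have "\<not> Q i" using ij unfolding i0_def by (metis not_less_Least)
      then show "x \<in> res_at h (tents \<sigma>)"
        using ij x M(1) by (auto simp: Q_def res_at_def tents_def)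
    qed
  qed
  finally show ?thesis .
qed

lemma complete_maximal_tents_precede_rejs:
  assumes v: "valid_inst I" and c: "complete_list_of I" and m: "maximal_feasible I \<sigma>"
    and rj: "(r', h) \<in> rejs \<sigma>" and t: "(t, h) \<in> tents \<sigma>"
  shows "precedes (hlist I h) t r'"
proof (rule ccontr)
  assume np: "\<not> precedes (hlist I h) t r'"
  have f: "feasible I \<sigma>" using m by (simp add: maximal_feasible_def)
  have tp: "(t, h) \<in> props \<sigma>" and tnr: "(t, h) \<notin> rejs \<sigma>" using t by (auto simp: tents_def)
  have "(r', h) \<in> Res I \<times> Hos I" and "t \<in> Res I"
    using rj tp feasible_rejs_subset_props[OF f] feasible_props_subset[OF v f] by blast+
  then have sL: "set (hlist I h) = Res I" and dL: "distinct (hlist I h)"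
    and r't: "r' \<in> Res I" "t \<in> Res I"
    using v c by (auto simp: complete_list_of_def valid_inst_def)
  define L where "L = hlist I h"
  have "t \<noteq> r'" using rj tnr by auto
  then have pr: "precedes L r' t" using precedes_total sL r't np L_def by metis
  obtain M where M: "M \<subseteq> props \<sigma>" "ousted I M r' h" using feasible_rejsD[OF f rj] by blast
  have "quota I h \<le> card (set L \<inter> res_at h M)"
    using M(2) by (simp add: ousted_def L_def)
  also have "\<dots> \<le> card (set L \<inter> res_at h (props \<sigma>))"
    using M(1) by (intro card_mono) (auto simp: res_at_def)
  finally have A: "quota I h \<le> card (set L \<inter> res_at h (props \<sigma>))" .
  have "quota I h \<le> card {r'' \<in> res_at h M. precedes L r'' r'}"
    using M(2) r't sL by (simp add: ousted_def L_def)
  also have "\<dots> \<le> card {r'' \<in> res_at h (props \<sigma>). precedes L r'' t}"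
    using M(1) precedes_trans[OF dL[folded L_def] _ pr]
    by (intro card_mono[OF finite_subset[of _ "set L"]]) (auto simp: res_at_def dest: precedes_setD)
  finally have "ousted I (props \<sigma>) t h" unfolding ousted_def using tp A L_def by simp
  then show False using maximal_feasible_rejects[OF m] tnr by blast
qed

section \<open>Resident-changeless, hospital-complete extensions\<close>

locale changeless_complete_extension =
  fixes I I' :: "('r, 'h) inst"
  assumes valid: "valid_inst I" and valid': "valid_inst I'"
    and minimal: "resident_minimal I"
    and ext: "extension I I'" and changeless: "resident_changeless I I'"
    and complete: "hospital_complete I'"
begin

lemma same_Res_Hos_quota: "Res I' = Res I" "Hos I' = Hos I" "quota I' = quota I"
  using ext by (auto simp: extension_def)

lemma propI_eq_and_rejI_mono: "propI I' = propI I \<and> rejI I \<subseteq> rejI I'"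
proof -
  have m: "maximal_feasible I (max_seq I)" and m': "maximal_feasible I' (max_seq I')"
    using maximal_feasible_max_seq valid valid' by blast+
  have rl: "rlist I' = rlist I" by (rule resident_changeless_rlist_eq[OF valid valid' ext changeless])
  have "propI I \<subseteq> propI I' \<and> rejI I \<subseteq> rejI I'"
    using feasible_subsumed_by_maximal_extension[OF valid valid' ext rl m'] m
    by (simp add: maximal_feasible_def propI_def rejI_def)
  moreover have "propI I' \<subseteq> propI I"
    using minimal feasible_propsD m' rl
    by (fastforce simp: resident_minimal_def propI_def maximal_feasible_def)
  ultimately show ?thesis by blast
qed

lemma rejI'_subset_propI: "rejI I' \<subseteq> propI I"
  using feasible_rejs_subset_props maximal_feasible_max_seq[OF valid'] propI_eq_and_rejI_mono
  by (fastforce simp: rejI_def propI_def maximal_feasible_def)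

lemma new_rejI_subset_tentI: "rejI I' - rejI I \<subseteq> tentI I"
  using rejI'_subset_propI by (auto simp: tentI_def tents_def rejI_def propI_def)

lemma tentI'_eq: "tentI I' = tentI I - (rejI I' - rejI I)"
  using propI_eq_and_rejI_mono rejI'_subset_propI
  by (auto simp: tentI_def tents_def rejI_def propI_def)

lemma propI_subset_Res_Hos: "propI I \<subseteq> Res I \<times> Hos I"
  using feasible_props_subset[OF valid] maximal_feasible_max_seq[OF valid]
  by (simp add: propI_def maximal_feasible_def)

lemma quota_le_card_tentI':
  "(r', h) \<in> rejI I' \<Longrightarrow> quota I h \<le> card (res_at h (tentI I'))"
  using complete_rejection_quota_le_tents[OF valid' complete] maximal_feasible_max_seq[OF valid']
  by (simp add: rejI_def tentI_def maximal_feasible_def same_Res_Hos_quota)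

lemma tentI'_precedes_rejI':
  "(r', h) \<in> rejI I' \<Longrightarrow> (t, h) \<in> tentI I' \<Longrightarrow> precedes (hlist I' h) t r'"
  using complete_maximal_tents_precede_rejs[OF valid' complete maximal_feasible_max_seq[OF valid']]
  by (simp add: rejI_def tentI_def)

context
  fixes P Y :: "('r \<times> 'h) set"
  assumes presc: "prescription I' P Y"
begin

lemma presc_base_I': "presc_base I' P Y"
  using presc by (simp add: prescription_def)

lemma finite_res_at: "finite (res_at h (P \<union> (tentI I' - Y)))"
proof (rule finite_subset)
  show "res_at h (P \<union> (tentI I' - Y)) \<subseteq> Res I"
    using presc_base_I' propI_subset_Res_Hos tentI'_eq same_Res_Hos_quota
    by (auto simp: presc_base_def res_at_def tentI_def tents_def propI_def)
  show "finite (Res I)" using valid by (simp add: valid_inst_def)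
qed

text \<open>A hospital that rejects in \<open>I'\<close> is already filled by its tentative residents, so (P5)
  leaves room for prescriptions there only if \<open>Y\<close> frees some places.\<close>

lemma rejecting_hospital_without_Y:
  assumes h: "h \<in> Hos I" and rj: "(r', h) \<in> rejI I'" and Y: "res_at h Y = {}"
  shows "res_at h P = {} \<and> card (res_at h (P \<union> (tentI I' - Y))) = quota I h"
proof -
  have le: "card (res_at h (P \<union> (tentI I' - Y))) \<le> quota I h"
    using presc_base_I' h by (simp add: presc_base_def same_Res_Hos_quota)
  have eq: "res_at h (P \<union> (tentI I' - Y)) = res_at h P \<union> res_at h (tentI I')"
    using Y by (auto simp: res_at_def)
  have fin: "finite (res_at h (tentI I'))" using finite_res_at[of h] eq by simp
  have disj: "res_at h P \<inter> res_at h (tentI I') = {}"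
    using presc_base_I' by (auto simp: presc_base_def res_at_def tentI_def tents_def propI_def)
  have "res_at h P = {}"
  proof (rule ccontr)
    assume "res_at h P \<noteq> {}"
    then obtain r where r: "r \<in> res_at h P" by blast
    then have "r \<notin> res_at h (tentI I')" using disj by blast
    then have "Suc (card (res_at h (tentI I'))) = card (insert r (res_at h (tentI I')))"
      using fin by simp
    also have "\<dots> \<le> card (res_at h (P \<union> (tentI I' - Y)))"
      using r eq by (intro card_mono[OF finite_res_at]) auto
    finally show False using quota_le_card_tentI'[OF rj] le by linarith
  qed
  then show ?thesis using eq le quota_le_card_tentI'[OF rj] by simp
qed

lemma presc_base_new_rejI: "presc_base I P (Y \<union> (rejI I' - rejI I))" (is "presc_base I P ?X")
proof -
  have YT: "Y \<subseteq> tentI I'" and P4: "res P \<inter> res (tentI I') \<subseteq> res Y"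
    and P5: "\<forall>h\<in>Hos I. card (res_at h (P \<union> (tentI I' - Y))) \<le> quota I h
          \<and> (res_at h Y \<noteq> {} \<longrightarrow> card (res_at h (P \<union> (tentI I' - Y))) = quota I h)"
    using presc_base_I' by (auto simp: presc_base_def same_Res_Hos_quota)
  have XT: "?X \<subseteq> tentI I" and TX: "tentI I - ?X = tentI I' - Y"
    using YT new_rejI_subset_tentI tentI'_eq by auto
  have "res P \<inter> res (tentI I) \<subseteq> res ?X"
    using P4 tentI'_eq by (auto simp: res_def)
  moreover have "card (res_at h (P \<union> (tentI I - ?X))) = quota I h"
    if "h \<in> Hos I" and "res_at h ?X \<noteq> {}" for h
    using that P5 rejecting_hospital_without_Y TX by (cases "res_at h Y = {}") (auto simp: res_at_def)
  ultimately show ?thesis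
    using presc_base_I' XT TX P5 tentI'_eq propI_subset_Res_Hos propI_eq_and_rejI_mono
    by (auto simp: presc_base_def same_Res_Hos_quota tentI_def tents_def propI_def)
qed

lemma precedes_new_rejI:
  assumes h: "h \<in> Hos I" and r: "r \<in> res_at h (P \<union> (tentI I' - Y))"
    and r': "(r', h) \<in> Y \<union> (rejI I' - rejI I)" and r'L: "r' \<in> set (hlist I h)"
  shows "precedes (hlist I h) r r'"
proof -
  have P6: "\<And>r r'. r \<in> res_at h (P \<union> (tentI I' - Y)) \<Longrightarrow> (r', h) \<in> Y \<Longrightarrow>
      precedes (hlist I' h) r r'"
    using presc h by (auto simp: prescription_def same_Res_Hos_quota res_at_def)
  obtain zs where zs: "hlist I' h = hlist I h @ zs" using ext h by (auto simp: extension_def)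
  have dl': "distinct (hlist I' h)" using valid' h by (simp add: valid_inst_def same_Res_Hos_quota)
  have "precedes (hlist I' h) r r'"
  proof (cases "(r', h) \<in> Y")
    case False
    then have rj: "(r', h) \<in> rejI I'" using r' by auto
    show ?thesis
    proof (cases "(r, h) \<in> tentI I' - Y")
      case False
      then have "res_at h P \<noteq> {}" using r by (auto simp: res_at_def)
      then obtain y where y: "(y, h) \<in> Y"
        using rejecting_hospital_without_Y[OF h rj] by (auto simp: res_at_def)
      have "y \<in> res_at h (tentI I')" using y presc_base_I' by (auto simp: presc_base_def res_at_def)
      then show ?thesis
        using precedes_trans[OF dl' P6[OF r y]] tentI'_precedes_rejI'[OF rj] by (auto simp: res_at_def)
    qed (use tentI'_precedes_rejI'[OF rj] in auto)
  qed (use P6 r in auto)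
  then show ?thesis using precedes_append_prefix dl' zs r'L by metis
qed

lemma general_prescription_new_rejI: "general_prescription I P (Y \<union> (rejI I' - rejI I))"
  (is "general_prescription I P ?X")
proof -
  have TX: "tentI I - ?X = tentI I' - Y" and XT: "?X \<subseteq> tentI I"
    using presc_base_I' new_rejI_subset_tentI tentI'_eq by (auto simp: presc_base_def)
  have pend: "pendI I = {(r, h) \<in> tentI I. r \<notin> set (hlist I h)}"
    by (simp add: pendI_def pends_def tentI_def)
  have before: "precedes (hlist I h) r r'"
    if "h \<in> Hos I" "(r, h) \<in> P \<union> (tentI I - ?X)" "(r', h) \<in> ?X - pendI I" for h r r'
    using precedes_new_rejI that TX XT pend by (auto simp: res_at_def)
  have "(r, h) \<in> ?X" if "h \<in> Hos I" "(r', h) \<in> ?X - pendI I" "(r, h) \<in> pendI I" for h r r'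
  proof (rule ccontr)
    assume "(r, h) \<notin> ?X"
    then have "precedes (hlist I h) r r'" using that before pend by auto
    then show False using that pend by (auto dest: precedes_setD)
  qed
  then show ?thesis
    using presc_base_new_rejI before unfolding general_prescription_def by (auto simp: res_at_def)
qed

end

end

theorem lemma3:
  fixes I I' :: "('r, 'h) inst" and P Y :: "('r \<times> 'h) set"
  assumes "valid_inst I" and "valid_inst I'"
    and "resident_minimal I"
    and "extension I I'" and "resident_changeless I I'" and "hospital_complete I'"
    and "prescription I' P Y"
  shows "general_prescription I P (Y \<union> (rejI I' - rejI I))"
proof -
  interpret changeless_complete_extension I I'
    using assms(1-6) by unfold_locales
  show ?thesis using assms(7) by (rule general_prescription_new_rejI)
qed

end
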